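(* Let $n,p\ge1$, let $\mathbf{X}\in\mathbb{R}^{n\times p}$ be fixed, $\beta^0\in\mathbb{R}^p$, and $\mathbf{Y}=\mathbf{X}\beta^0+\varepsilon$ with $\varepsilon_1,\ldots,\varepsilon_n$ i.i.d. $\mathcal{N}(0,\sigma^2)$, $\sigma>0$. Let $\lambda>0$, assume $\Omega_{\min}(\lambda)>0$, let $\hat\beta=\hat\beta(\lambda)=(\hat\Sigma+\lambda I_p)^{-1}n^{-1}\mathbf{X}^T\mathbf{Y}$, let $\hat\beta_{\mathrm{init}}$ be any estimator of $\beta^0$ (a measurable function of $\mathbf{Y}$), and define the corrected Ridge estimator $\hat\beta_{\mathrm{corr};j}=\hat\beta_j-\sum_{k\neq j}(P_{\mathbf{X}})_{jk}\hat\beta_{\mathrm{init};k}$, $j=1,\ldots,p$. Then $$\hat\beta_{\mathrm{corr};j}=Z_j+\gamma_j\quad(j=1,\ldots,p),$$ where $(Z_1,\ldots,Z_p)\sim\mathcal{N}_p(0,n^{-1}\sigma^2\Omega(\lambda))$ and $$\gamma_j=(P_{\mathbf{X}})_{jj}\beta^0_j-\sum_{k\neq j}(P_{\mathbf{X}})_{jk}(\hat\beta_{\mathrm{init};k}-\beta^0_k)+b_j(\lambda),\qquad b_j(\lambda)=\mathbb{E}[\hat\beta_j(\lambda)]-\theta^0_j.$$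
   Context: $\hat\Sigma=n^{-1}\mathbf{X}^T\mathbf{X}$; $P_{\mathbf{X}}=\mathbf{X}^T(\mathbf{X}\mathbf{X}^T)^{-}\mathbf{X}$ (Moore–Penrose pseudo-inverse), the orthogonal projection onto the row space of $\mathbf{X}$; $\theta^0=P_{\mathbf{X}}\beta^0$. $\Omega(\lambda)=(\hat\Sigma+\lambda I_p)^{-1}\hat\Sigma(\hat\Sigma+\lambda I_p)^{-1}$, $\Omega_{\min}(\lambda)=\min_j\Omega_{jj}(\lambda)$. *)

theory Defs
  imports "HOL-Probability.Probability"
begin

definition mp_pinv :: "real^'m^'n \<Rightarrow> real^'n^'m" where
  "mp_pinv A = (THE B. A ** B ** A = A \<and> B ** A ** B = B \<and>
                  transpose (A ** B) = A ** B \<and> transpose (B ** A) = B ** A)"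

text \<open>Design matrix X has n = CARD('n) rows and p = CARD('p) columns.\<close>
definition Sigma_hat :: "real^'p^'n \<Rightarrow> real^'p^'p" where
  "Sigma_hat X = (1 / real CARD('n)) *\<^sub>R (transpose X ** X)"

definition proj_X :: "real^'p^'n \<Rightarrow> real^'p^'p" where
  "proj_X X = transpose X ** mp_pinv (X ** transpose X) ** X"

definition theta0 :: "real^'p^'n \<Rightarrow> real^'p \<Rightarrow> real^'p" where
  "theta0 X beta0 = proj_X X *v beta0"

definition Omega :: "real^'p^'n \<Rightarrow> real \<Rightarrow> real^'p^'p" where
  "Omega X lam = matrix_inv (Sigma_hat X + lam *\<^sub>R mat 1) ** Sigma_hat X
                   ** matrix_inv (Sigma_hat X + lam *\<^sub>R mat 1)"

definition Omega_min :: "real^'p^'n \<Rightarrow> real \<Rightarrow> real" where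
  "Omega_min X lam = Min (range (\<lambda>j. Omega X lam $ j $ j))"

definition ridge :: "real^'p^'n \<Rightarrow> real \<Rightarrow> real^'n \<Rightarrow> real^'p" where
  "ridge X lam y = matrix_inv (Sigma_hat X + lam *\<^sub>R mat 1)
                     *v ((1 / real CARD('n)) *\<^sub>R (transpose X *v y))"

definition ridge_corr :: "real^'p^'n \<Rightarrow> real \<Rightarrow> (real^'n \<Rightarrow> real^'p) \<Rightarrow> real^'n \<Rightarrow> real^'p" where
  "ridge_corr X lam binit y = (\<chi> j. ridge X lam y $ j
       - (\<Sum>k\<in>UNIV - {j}. proj_X X $ j $ k * binit y $ k))"

definition real_normal :: "'a measure \<Rightarrow> ('a \<Rightarrow> real) \<Rightarrow> real \<Rightarrow> real \<Rightarrow> bool" where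
  "real_normal M Y m v \<longleftrightarrow> Y \<in> borel_measurable M \<and>
     ((v > 0 \<and> distributed M lborel Y (normal_density m (sqrt v))) \<or>
      (v = 0 \<and> distr M borel Y = return borel m))"

definition gaussian_vec :: "'a measure \<Rightarrow> ('a \<Rightarrow> real^'p) \<Rightarrow> real^'p \<Rightarrow> real^'p^'p \<Rightarrow> bool" where
  "gaussian_vec M Z mu C \<longleftrightarrow> Z \<in> borel_measurable M \<and>
     (\<forall>a. real_normal M (\<lambda>\<omega>. a \<bullet> Z \<omega>) (a \<bullet> mu) (a \<bullet> (C *v a)))"

end

theory Submission imports Defs begin

(* The Ridge estimator is linear in the response: with the gain matrix
   G = (1/n) (Sigma_hat + lam I)^-1 X^T one has ridge (X beta0 + eps) = ridge (X beta0) + G eps.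
   The noise term Z = G eps is a linear image of i.i.d. centred normals, hence Gaussian with
   covariance sigma^2 G G^T = (sigma^2/n) Omega (by symmetry of Sigma_hat + lam I), and it has
   mean zero, so ridge (X beta0) is the expectation of the Ridge estimator. The rest is
   bookkeeping: theta0_j is split into its diagonal and off-diagonal part. *)

lemma (in prob_space) real_normal_inner_iid_normal:
  fixes eps :: "'a \<Rightarrow> real^'n" and w :: "real^'n"
  assumes s: "s > 0"
    and normal: "\<And>i. distributed M lborel (\<lambda>\<omega>. eps \<omega> $ i) (normal_density 0 s)"
    and indep: "indep_vars (\<lambda>_. borel) (\<lambda>i \<omega>. eps \<omega> $ i) UNIV"
  shows "real_normal M (\<lambda>\<omega>. w \<bullet> eps \<omega>) 0 (s\<^sup>2 * (w \<bullet> w))"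
proof -
  have meas: "(\<lambda>\<omega>. eps \<omega> $ i) \<in> borel_measurable M" for i
    using distributed_measurable[OF normal[of i]] by simp
  define I where "I = {i. w $ i \<noteq> 0}"
  have inner_I: "w \<bullet> v = (\<Sum>i\<in>I. w $ i * v $ i)" for v
    unfolding inner_vec_def inner_real_def I_def by (rule sum.mono_neutral_right) auto
  have inner_eps: "(\<lambda>\<omega>. w \<bullet> eps \<omega>) = (\<lambda>\<omega>. \<Sum>i\<in>I. w $ i * eps \<omega> $ i)"
    using inner_I by simp
  have measurable: "(\<lambda>\<omega>. w \<bullet> eps \<omega>) \<in> borel_measurable M"
    unfolding inner_eps using meas by measurable
  show ?thesis
  proof (cases "I = {}")
    case True
    then show ?thesis
      unfolding real_normal_def inner_eps using measurable inner_I[of w] by simp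
  next
    case False
    have var: "(\<Sum>i\<in>I. (\<bar>w $ i\<bar> * s)\<^sup>2) = s\<^sup>2 * (w \<bullet> w)"
      by (simp add: inner_I power_mult_distrib sum_distrib_left mult_ac power2_eq_square abs_mult_self_eq)
    have "(\<Sum>i\<in>I. (\<bar>w $ i\<bar> * s)\<^sup>2) > 0"
      using False s by (intro sum_pos) (auto simp: I_def)
    then have pos: "s\<^sup>2 * (w \<bullet> w) > 0" by (simp add: var)
    have indep_I: "indep_vars (\<lambda>_. borel) (\<lambda>i \<omega>. w $ i * eps \<omega> $ i) I"
      by (rule indep_vars_compose2[where Y="\<lambda>i x. w $ i * x",
            OF indep_vars_subset[OF indep]]) auto
    have "distributed M lborel (\<lambda>\<omega>. w $ i * eps \<omega> $ i) (normal_density 0 (\<bar>w $ i\<bar> * s))"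
      if "i \<in> I" for i
      using normal_density_affine[OF normal[of i] s, of "w $ i" 0] that by (simp add: I_def)
    then have "distributed M lborel (\<lambda>\<omega>. \<Sum>i\<in>I. w $ i * eps \<omega> $ i)
        (normal_density 0 (sqrt (\<Sum>i\<in>I. (\<bar>w $ i\<bar> * s)\<^sup>2)))"
      using sum_indep_normal[OF finite False indep_I, of "\<lambda>i. \<bar>w $ i\<bar> * s" "\<lambda>_. 0"] s
      by (auto simp: I_def)
    then have "distributed M lborel (\<lambda>\<omega>. w \<bullet> eps \<omega>) (normal_density 0 (sqrt (s\<^sup>2 * (w \<bullet> w))))"
      unfolding inner_eps var .
    then show ?thesis
      unfolding real_normal_def using measurable pos by simp
  qed
qed

lemma (in prob_space) gaussian_vec_linear_image_iid_normal:
  fixes eps :: "'a \<Rightarrow> real^'n" and G :: "real^'n^'p"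
  assumes "s > 0"
    and normal: "\<And>i. distributed M lborel (\<lambda>\<omega>. eps \<omega> $ i) (normal_density 0 s)"
    and "indep_vars (\<lambda>_. borel) (\<lambda>i \<omega>. eps \<omega> $ i) UNIV"
  shows "gaussian_vec M (\<lambda>\<omega>. G *v eps \<omega>) 0 (s\<^sup>2 *\<^sub>R (G ** transpose G))"
  unfolding gaussian_vec_def
proof (intro conjI allI)
  have "(\<lambda>\<omega>. eps \<omega> $ i) \<in> borel_measurable M" for i
    using distributed_measurable[OF normal[of i]] by simp
  then have "(\<lambda>\<omega>. (G *v eps \<omega>) $ j) \<in> borel_measurable M" for j
    unfolding matrix_vector_mult_def by simp measurable
  then show "(\<lambda>\<omega>. G *v eps \<omega>) \<in> borel_measurable M"
    by (subst borel_measurable_euclidean_space)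
      (auto simp: Basis_vec_def cart_eq_inner_axis[symmetric])
next
  fix a :: "real^'p"
  have "a \<bullet> (G *v v) = (transpose G *v a) \<bullet> v" for v
    by (simp add: dot_lmul_matrix)
  moreover have "a \<bullet> ((s\<^sup>2 *\<^sub>R (G ** transpose G)) *v a)
      = s\<^sup>2 * ((transpose G *v a) \<bullet> (transpose G *v a))"
    by (simp add: scaleR_matrix_vector_assoc[symmetric] matrix_vector_mul_assoc[symmetric]
        dot_lmul_matrix inner_commute)
  ultimately show "real_normal M (\<lambda>\<omega>. a \<bullet> (G *v eps \<omega>)) (a \<bullet> 0)
      (a \<bullet> ((s\<^sup>2 *\<^sub>R (G ** transpose G)) *v a))"
    using real_normal_inner_iid_normal[OF assms] by simp
qed

lemma (in prob_space) expectation_affine_image_centered: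
  fixes eps :: "'a \<Rightarrow> real^'n" and G :: "real^'n^'p"
  assumes "\<And>i. integrable M (\<lambda>\<omega>. eps \<omega> $ i)"
    and "\<And>i. expectation (\<lambda>\<omega>. eps \<omega> $ i) = 0"
  shows "expectation (\<lambda>\<omega>. (c + G *v eps \<omega>) $ j) = c $ j"
  using assms by (simp add: matrix_vector_mult_def prob_space)

lemma transpose_matrix_inv_symmetric:
  fixes B :: "real^'n^'n"
  assumes "invertible B" and "transpose B = B"
  shows "transpose (matrix_inv B) = matrix_inv B"
proof -
  have inv: "B ** matrix_inv B = mat 1 \<and> matrix_inv B ** B = mat 1"
    using assms(1) unfolding invertible_def matrix_inv_def by (rule someI_ex)
  have "transpose (matrix_inv B) ** B = mat 1"
    using inv assms(2) by (metis matrix_transpose_mul transpose_mat)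
  then show ?thesis
    using inv by (metis matrix_mul_assoc matrix_mul_rid)
qed

lemma transpose_Sigma_hat_plus:
  "transpose (Sigma_hat X + lam *\<^sub>R mat 1) = Sigma_hat X + lam *\<^sub>R mat 1"
  by (simp add: Sigma_hat_def vec_eq_iff transpose_def matrix_matrix_mult_def mat_def mult.commute)

lemma invertible_Sigma_hat_plus:
  fixes X :: "real^'p^'n"
  assumes "lam > 0"
  shows "invertible (Sigma_hat X + lam *\<^sub>R mat 1)"
proof -
  have "x = 0" if "(Sigma_hat X + lam *\<^sub>R mat 1) *v x = 0" for x
  proof -
    have "0 = x \<bullet> ((Sigma_hat X + lam *\<^sub>R mat 1) *v x)" by (simp add: that)
    also have "\<dots> = (X *v x) \<bullet> (X *v x) / real CARD('n) + lam * (x \<bullet> x)"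
      by (simp add: Sigma_hat_def matrix_vector_mult_add_rdistrib inner_add_right
          scaleR_matrix_vector_assoc[symmetric] matrix_vector_mul_assoc[symmetric]
          dot_lmul_matrix[symmetric] inner_commute)
    also have "\<dots> \<ge> lam * (x \<bullet> x)" by simp
    finally have "x \<bullet> x \<le> 0" using assms by (simp add: mult_le_0_iff)
    then show "x = 0" using inner_ge_zero[of x] by simp
  qed
  then show ?thesis
    using matrix_left_invertible_ker invertible_left_inverse by blast
qed

definition ridge_gain :: "real^'p^'n \<Rightarrow> real \<Rightarrow> real^'n^'p" where
  "ridge_gain X lam =
     (1 / real CARD('n)) *\<^sub>R (matrix_inv (Sigma_hat X + lam *\<^sub>R mat 1) ** transpose X)"

lemma ridge_eq_ridge_gain: "ridge X lam y = ridge_gain X lam *v y"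
  by (simp add: ridge_def ridge_gain_def matrix_vector_mul_assoc[symmetric]
      scaleR_matrix_vector_assoc[symmetric] matrix_scaleR_vector_ac)

lemma ridge_gain_covariance:
  fixes X :: "real^'p^'n"
  assumes "lam > 0"
  shows "ridge_gain X lam ** transpose (ridge_gain X lam) = (1 / real CARD('n)) *\<^sub>R Omega X lam"
proof -
  define A where "A = matrix_inv (Sigma_hat X + lam *\<^sub>R mat 1)"
  have "transpose A = A"
    unfolding A_def using invertible_Sigma_hat_plus[OF assms]
    by (rule transpose_matrix_inv_symmetric) (rule transpose_Sigma_hat_plus)
  then show ?thesis
    unfolding ridge_gain_def Omega_def A_def[symmetric]
    by (simp add: Sigma_hat_def transpose_scalar matrix_transpose_mul matrix_mul_assoc
        scalar_matrix_assoc[symmetric] matrix_scalar_ac)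
qed

lemma matrix_vector_mult_component_diag_split:
  "(A *v x) $ j = A $ j $ j * x $ j + (\<Sum>k\<in>UNIV - {j}. A $ j $ k * x $ k)"
  by (simp add: matrix_vector_mult_def sum.remove[of UNIV j])

theorem proposition2:
  fixes M :: "'a measure"
    and X :: "real^'p^'n" and beta0 :: "real^'p"
    and eps :: "'a \<Rightarrow> real^'n"
    and sigma lam :: real
    and binit :: "real^'n \<Rightarrow> real^'p"
  assumes "prob_space M"
    and "sigma > 0"
    and "\<And>i. distributed M lborel (\<lambda>\<omega>. eps \<omega> $ i) (normal_density 0 sigma)"
    and "prob_space.indep_vars M (\<lambda>_. borel) (\<lambda>i \<omega>. eps \<omega> $ i) UNIV"
    and "lam > 0"
    and "Omega_min X lam > 0"
    and "binit \<in> borel_measurable borel"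
  shows "\<exists>Z. gaussian_vec M Z 0 ((sigma\<^sup>2 / real CARD('n)) *\<^sub>R Omega X lam) \<and>
     (\<forall>\<omega>\<in>space M. \<forall>j.
        ridge_corr X lam binit (X *v beta0 + eps \<omega>) $ j
        = Z \<omega> $ j
          + (proj_X X $ j $ j * beta0 $ j
             - (\<Sum>k\<in>UNIV - {j}. proj_X X $ j $ k * (binit (X *v beta0 + eps \<omega>) $ k - beta0 $ k))
             + (prob_space.expectation M (\<lambda>\<omega>'. ridge X lam (X *v beta0 + eps \<omega>') $ j)
                - theta0 X beta0 $ j)))"
proof -
  interpret prob_space M by fact
  define Z where "Z \<omega> = ridge_gain X lam *v eps \<omega>" for \<omega>
  have ridge_split: "ridge X lam (X *v beta0 + eps \<omega>) = ridge X lam (X *v beta0) + Z \<omega>" for \<omega>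
    by (simp add: Z_def ridge_eq_ridge_gain matrix_vector_right_distrib)
  have "gaussian_vec M Z 0 (sigma\<^sup>2 *\<^sub>R (ridge_gain X lam ** transpose (ridge_gain X lam)))"
    unfolding Z_def using gaussian_vec_linear_image_iid_normal assms(2-4) by blast
  then have gaussian: "gaussian_vec M Z 0 ((sigma\<^sup>2 / real CARD('n)) *\<^sub>R Omega X lam)"
    by (simp add: ridge_gain_covariance[OF assms(5)])
  have "integrable M (\<lambda>\<omega>. eps \<omega> $ i)" for i
    using assms(2) by (intro distributed_integrable_var[OF assms(3)] integrable_normal_moment_nz_1) auto
  then have mean: "expectation (\<lambda>\<omega>. ridge X lam (X *v beta0 + eps \<omega>) $ j) = ridge X lam (X *v beta0) $ j"
    for j
    unfolding ridge_split Z_def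
    using expectation_affine_image_centered normal_distributed_expectation[OF assms(2,3)] by blast
  show ?thesis
    using gaussian unfolding ridge_corr_def mean
    by (intro exI[of _ Z]) (auto simp: ridge_split theta0_def matrix_vector_mult_component_diag_split
        right_diff_distrib sum_subtractf)
qed

end
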